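(* $\mathcal{H}^3=\left\{a+b\mathbf{j}\in\mathbb{D} : |a|+|b|\leq \frac{2}{3\sqrt{3}}\right\}$. In particular $\mathcal{H}^3$ is a square centered at the origin with side length $\frac{2\sqrt{2}}{3\sqrt{3}}$.
   Context: The hyperbolic numbers are $\mathbb{D}=\{a+b\mathbf{j} : a,b\in\mathbb{R}\}$ with $\mathbf{j}^2=1$, $\mathbf{j}\notin\mathbb{R}$, a commutative real algebra identified with $\mathbb{R}^2$ via $a+b\mathbf{j}\leftrightarrow(a,b)$, with the Euclidean norm. For $c\in\mathbb{D}$, $Q_{3,c}(z)=z^3+c$ on $\mathbb{D}$, $Q_{3,c}^m$ its $m$-fold iterate, and $\mathcal{H}^3=\{c\in\mathbb{D} : (Q_{3,c}^m(0))_{m\geq1}\text{ is bounded}\}$. *)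

theory Defs
  imports "HOL-Analysis.Analysis"
begin

text \<open>Hyperbolic numbers D = {a + b j : j^2 = 1}, identified with real \<times> real via
  a + b j <-> (a, b), with the Euclidean norm of the product type.\<close>

type_synonym hyperbolic = "real \<times> real"

definition hmult :: "hyperbolic \<Rightarrow> hyperbolic \<Rightarrow> hyperbolic" where
  "hmult z w = (fst z * fst w + snd z * snd w, fst z * snd w + snd z * fst w)"

definition hcube :: "hyperbolic \<Rightarrow> hyperbolic" where
  "hcube z = hmult z (hmult z z)"

definition Q3 :: "hyperbolic \<Rightarrow> hyperbolic \<Rightarrow> hyperbolic" where
  "Q3 c z = hcube z + c"

definition H3 :: "hyperbolic set" where
  "H3 = {c. bounded (range (\<lambda>m::nat. ((Q3 c) ^^ (Suc m)) 0))}"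

end

theory Submission
  imports Defs
begin

(* The hyperbolic numbers split as a product of two copies of the reals:
   for s = 1 and s = -1 the coordinate  z \<mapsto> fst z + s * snd z  is a ring homomorphism
   D \<rightarrow> R (the idempotent decomposition).  Hence the critical orbit of Q_{3,c} is determined
   by the two real orbits of  x \<mapsto> x^3 + t  started at 0, with t = c1 + c2 and t = c1 - c2,
   and it is bounded iff both real orbits are.  For real t the orbit is bounded iff
   |t| \<le> 2/(3 sqrt 3): for such t the interval [-1/sqrt 3, 1/sqrt 3] is invariant, while for
   t > 2/(3 sqrt 3) the identity  x^3 - x + 2/(3 sqrt 3) = (x - 1/sqrt 3)^2 (x + 2/sqrt 3)
   shows that each step increases the orbit by at least t - 2/(3 sqrt 3).
   The two conditions |c1 + c2| \<le> r, |c1 - c2| \<le> r together say |c1| + |c2| \<le> r. *)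

primrec cubic_orbit :: "real \<Rightarrow> nat \<Rightarrow> real" where
  "cubic_orbit t 0 = 0"
| "cubic_orbit t (Suc n) = (cubic_orbit t n) ^ 3 + t"

text \<open>The map is odd in the parameter, so it suffices to study t \<ge> 0.\<close>
lemma cubic_orbit_uminus: "cubic_orbit (- t) n = - cubic_orbit t n"
  by (induction n) (auto simp: power3_eq_cube)

lemma inverse_sqrt3_cube: "(1 / sqrt 3) ^ 3 = 1 / (3 * sqrt (3::real))"
  by (simp add: power3_eq_cube mult.assoc[symmetric])

lemma cubic_orbit_bounded:
  assumes "\<bar>t\<bar> \<le> 2 / (3 * sqrt 3)"
  shows "\<bar>cubic_orbit t n\<bar> \<le> 1 / sqrt 3"
proof (induction n)
  case 0
  then show ?case by simp
next
  case (Suc n)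
  have cube: "\<bar>cubic_orbit t n\<bar> ^ 3 \<le> 1 / (3 * sqrt 3)"
    using power_mono[OF Suc, of 3] by (simp add: inverse_sqrt3_cube)
  have "\<bar>cubic_orbit t (Suc n)\<bar> \<le> \<bar>cubic_orbit t n\<bar> ^ 3 + \<bar>t\<bar>"
    by (simp add: abs_triangle_ineq[THEN order_trans] power_abs[symmetric])
  also have "\<dots> \<le> 1 / (3 * sqrt 3) + 2 / (3 * sqrt 3)"
    using cube assms by linarith
  also have "\<dots> = 1 / sqrt 3"
    by (simp add: field_simps)
  finally show ?case .
qed

text \<open>The cubic x^3 - x + 2/(3 sqrt 3) has a double root at 1/sqrt 3 and no positive
  sign change; this is why 2/(3 sqrt 3) is the threshold.\<close>
lemma cubic_threshold_nonneg:
  assumes "x \<ge> 0"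
  shows "x ^ 3 - x + 2 / (3 * sqrt 3) \<ge> 0"
proof -
  define s where "s = 1 / sqrt (3::real)"
  have square: "3 * s ^ 2 = 1"
    by (simp add: s_def power2_eq_square)
  have cube: "2 * s ^ 3 = 2 / (3 * sqrt 3)"
    using inverse_sqrt3_cube by (simp add: s_def)
  have "x ^ 3 - x + 2 / (3 * sqrt 3) = (x - s) ^ 2 * (x + 2 * s)"
    using square cube by (simp add: algebra_simps power2_eq_square power3_eq_cube)
  also have "\<dots> \<ge> 0"
    using assms by (simp add: s_def)
  finally show ?thesis .
qed

lemma cubic_orbit_linear_growth:
  assumes "t > 2 / (3 * sqrt 3)"
  shows "cubic_orbit t n \<ge> real n * (t - 2 / (3 * sqrt 3))"
proof (induction n)
  case 0
  then show ?case by simp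
next
  case (Suc n)
  have "cubic_orbit t n \<ge> 0"
    using Suc assms by (smt (verit) mult_nonneg_nonneg of_nat_0_le_iff)
  then have "cubic_orbit t n ^ 3 + t \<ge> cubic_orbit t n + (t - 2 / (3 * sqrt 3))"
    using cubic_threshold_nonneg by fastforce
  with Suc show ?case
    by (simp add: distrib_right)
qed

lemma cubic_orbit_bounded_iff:
  "(\<exists>B. \<forall>m. \<bar>cubic_orbit t (Suc m)\<bar> \<le> B) \<longleftrightarrow> \<bar>t\<bar> \<le> 2 / (3 * sqrt 3)"
proof
  assume "\<exists>B. \<forall>m. \<bar>cubic_orbit t (Suc m)\<bar> \<le> B"
  then obtain B where B: "\<And>m. \<bar>cubic_orbit t (Suc m)\<bar> \<le> B"
    by blast
  show "\<bar>t\<bar> \<le> 2 / (3 * sqrt 3)"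
  proof (rule ccontr)
    let ?\<delta> = "\<bar>t\<bar> - 2 / (3 * sqrt 3)"
    assume "\<not> \<bar>t\<bar> \<le> 2 / (3 * sqrt 3)"
    then have above: "\<bar>t\<bar> > 2 / (3 * sqrt 3)"
      by simp
    have bounded: "\<bar>cubic_orbit \<bar>t\<bar> (Suc m)\<bar> \<le> B" for m
      using B[of m] cubic_orbit_uminus[of t "Suc m"] by (cases "t \<ge> 0") auto
    obtain n where n: "B < real n * ?\<delta>"
      using reals_Archimedean3[of ?\<delta>] above by auto
    have "real n * ?\<delta> \<le> real (Suc n) * ?\<delta>"
      using above by (intro mult_right_mono) auto
    also have "\<dots> \<le> cubic_orbit \<bar>t\<bar> (Suc n)"
      by (rule cubic_orbit_linear_growth[OF above])
    also have "\<dots> \<le> B"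
      using bounded[of n] by simp
    finally show False
      using n by simp
  qed
next
  assume "\<bar>t\<bar> \<le> 2 / (3 * sqrt 3)"
  then show "\<exists>B. \<forall>m. \<bar>cubic_orbit t (Suc m)\<bar> \<le> B"
    using cubic_orbit_bounded by blast
qed

definition idem_coord :: "real \<Rightarrow> hyperbolic \<Rightarrow> real" where
  "idem_coord s z = fst z + s * snd z"

lemma idem_coord_hmult:
  assumes "s ^ 2 = 1"
  shows "idem_coord s (hmult z w) = idem_coord s z * idem_coord s w"
proof -
  have "idem_coord s z * idem_coord s w
        = fst z * fst w + s ^ 2 * (snd z * snd w) + s * (fst z * snd w + snd z * fst w)"
    by (simp add: idem_coord_def algebra_simps power2_eq_square)
  then show ?thesis
    using assms by (simp add: idem_coord_def hmult_def algebra_simps)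
qed

lemma idem_coord_add: "idem_coord s (z + w) = idem_coord s z + idem_coord s w"
  by (simp add: idem_coord_def algebra_simps)

lemma idem_coord_Q3_orbit:
  assumes "s ^ 2 = 1"
  shows "idem_coord s ((Q3 c ^^ m) 0) = cubic_orbit (idem_coord s c) m"
proof (induction m)
  case 0
  then show ?case by (simp add: idem_coord_def)
next
  case (Suc m)
  then show ?case
    using assms by (simp add: Q3_def hcube_def idem_coord_add idem_coord_hmult power3_eq_cube)
qed

text \<open>A family of hyperbolic numbers is bounded iff both idempotent coordinates are,
  since |z1| + |z2| \<le> 2 norm z and norm z \<le> |z1 + z2| + |z1 - z2|.\<close>
lemma bounded_range_iff_idem_coords:
  fixes f :: "'a \<Rightarrow> hyperbolic"
  shows "bounded (range f) \<longleftrightarrow>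
         (\<exists>B. \<forall>x. \<bar>idem_coord 1 (f x)\<bar> \<le> B) \<and> (\<exists>B. \<forall>x. \<bar>idem_coord (-1) (f x)\<bar> \<le> B)"
proof -
  have coords_le_norm: "\<bar>fst z\<bar> + \<bar>snd z\<bar> \<le> 2 * norm z" for z :: hyperbolic
    using norm_fst_le[of "fst z" "snd z"] norm_snd_le[of "snd z" "fst z"] by simp
  have norm_le_coords: "norm z \<le> \<bar>idem_coord 1 z\<bar> + \<bar>idem_coord (-1) z\<bar>" for z :: hyperbolic
    using norm_Pair_le[of "fst z" "snd z"] by (simp add: idem_coord_def)
  show ?thesis
  proof
    assume "bounded (range f)"
    then obtain B where B: "\<And>x. norm (f x) \<le> B"
      unfolding bounded_iff by auto
    have "\<bar>idem_coord s (f x)\<bar> \<le> 2 * B" if "\<bar>s\<bar> = 1" for s x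
    proof -
      have "\<bar>idem_coord s (f x)\<bar> \<le> \<bar>fst (f x)\<bar> + \<bar>snd (f x)\<bar>"
        using that abs_triangle_ineq[of "fst (f x)" "s * snd (f x)"]
        by (simp add: idem_coord_def abs_mult)
      then show ?thesis
        using coords_le_norm[of "f x"] B[of x] by linarith
    qed
    then show "(\<exists>B. \<forall>x. \<bar>idem_coord 1 (f x)\<bar> \<le> B) \<and> (\<exists>B. \<forall>x. \<bar>idem_coord (-1) (f x)\<bar> \<le> B)"
      by (metis abs_1 abs_minus)
  next
    assume "(\<exists>B. \<forall>x. \<bar>idem_coord 1 (f x)\<bar> \<le> B) \<and> (\<exists>B. \<forall>x. \<bar>idem_coord (-1) (f x)\<bar> \<le> B)"
    then obtain B1 B2 where "\<And>x. \<bar>idem_coord 1 (f x)\<bar> \<le> B1" "\<And>x. \<bar>idem_coord (-1) (f x)\<bar> \<le> B2"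
      by blast
    then have "norm (f x) \<le> B1 + B2" for x
      using norm_le_coords[of "f x"] by (smt (verit))
    then show "bounded (range f)"
      unfolding bounded_iff by blast
  qed
qed

lemma H3_iff_idem_coords:
  "c \<in> H3 \<longleftrightarrow> \<bar>idem_coord 1 c\<bar> \<le> 2 / (3 * sqrt 3) \<and> \<bar>idem_coord (-1) c\<bar> \<le> 2 / (3 * sqrt 3)"
  unfolding H3_def mem_Collect_eq bounded_range_iff_idem_coords
  by (simp only: idem_coord_Q3_orbit power_one power2_minus cubic_orbit_bounded_iff)

lemma abs_add_diff_le_iff: "\<bar>a + b\<bar> \<le> r \<and> \<bar>a - b\<bar> \<le> r \<longleftrightarrow> \<bar>a\<bar> + \<bar>b\<bar> \<le> (r::real)"
  by arith

lemma H3_eq_l1_ball: "H3 = {(a, b). \<bar>a\<bar> + \<bar>b\<bar> \<le> 2 / (3 * sqrt 3)}"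
  using H3_iff_idem_coords abs_add_diff_le_iff by (auto simp: idem_coord_def)

lemma convex_l1_ball: "convex {(a, b). \<bar>a\<bar> + \<bar>b\<bar> \<le> (r::real)}"
  unfolding convex_def
proof clarsimp
  fix a b a' b' u v :: real
  assume h: "\<bar>a\<bar> + \<bar>b\<bar> \<le> r" "\<bar>a'\<bar> + \<bar>b'\<bar> \<le> r" "0 \<le> u" "0 \<le> v" "u + v = 1"
  have "\<bar>u * a + v * a'\<bar> + \<bar>u * b + v * b'\<bar> \<le> u * (\<bar>a\<bar> + \<bar>b\<bar>) + v * (\<bar>a'\<bar> + \<bar>b'\<bar>)"
    using h(3,4) abs_triangle_ineq[of "u * a" "v * a'"] abs_triangle_ineq[of "u * b" "v * b'"]
    by (simp add: abs_mult algebra_simps)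
  also have "\<dots> \<le> u * r + v * r"
    using h by (intro add_mono mult_left_mono) auto
  finally show "\<bar>u * a + v * a'\<bar> + \<bar>u * b + v * b'\<bar> \<le> r"
    using h(5) by (metis distrib_right mult_1)
qed

text \<open>Every point of the l1-ball of radius r is a convex combination of the four vertices
  (\<plusminus>r, 0), (0, \<plusminus>r): put weight max(\<plusminus>a, 0)/r, max(\<plusminus>b, 0)/r on the vertices
  and spread the remaining mass 1 - (|a| + |b|)/r evenly.\<close>
lemma l1_ball_subset_hull:
  fixes r :: real
  assumes r: "r > 0"
  shows "{(a, b). \<bar>a\<bar> + \<bar>b\<bar> \<le> r} \<subseteq> convex hull {(r, 0), (0, r), (-r, 0), (0, -r)}"
proof -
  have "finite {(r, 0), (0, r), (-r, 0), (0, -r)}"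
    by simp
  note hull_finite = convex_hull_finite[OF this]
  show ?thesis
  proof (clarsimp simp only: hull_finite)
    fix a b :: real
    assume h: "\<bar>a\<bar> + \<bar>b\<bar> \<le> r"
    define w where "w = (1 - (\<bar>a\<bar> + \<bar>b\<bar>) / r) / 4"
    have w0: "w \<ge> 0"
      using h r by (simp add: w_def field_simps)
    define u where "u p = (if p = (r, 0) then max a 0 / r + w else if p = (0, r) then max b 0 / r + w
       else if p = (-r, 0) then max (-a) 0 / r + w else max (-b) 0 / r + w)" for p :: hyperbolic
    have distinct: "(r, 0) \<noteq> (0, r)" "(r, 0) \<noteq> (-r, 0)" "(r, 0) \<noteq> (0::real, -r)"
      "(0, r) \<noteq> (-r, 0::real)" "(0, r) \<noteq> (0::real, -r)" "(-r, 0) \<noteq> (0::real, -r)"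
      using r by auto
    show "\<exists>u. (\<forall>x\<in>{(r, 0), (0, r), (- r, 0), (0, - r)}. 0 \<le> u x) \<and>
             sum u {(r, 0), (0, r), (- r, 0), (0, - r)} = 1 \<and>
             (\<Sum>x\<in>{(r, 0), (0, r), (- r, 0), (0, - r)}. u x *\<^sub>R x) = (a, b)"
    proof (intro exI[of _ u] conjI)
      show "\<forall>x\<in>{(r, 0), (0, r), (- r, 0), (0, - r)}. 0 \<le> u x"
        using w0 r by (auto simp: u_def)
      show "sum u {(r, 0), (0, r), (- r, 0), (0, - r)} = 1"
        using distinct r by (simp add: u_def w_def field_simps max_def abs_if split: if_splits)
      show "(\<Sum>x\<in>{(r, 0), (0, r), (- r, 0), (0, - r)}. u x *\<^sub>R x) = (a, b)"
        using distinct r by (simp add: u_def w_def field_simps max_def abs_if split: if_splits)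
    qed
  qed
qed

lemma l1_ball_eq_convex_hull:
  fixes r :: real
  assumes "r > 0"
  shows "convex hull {(r, 0), (0, r), (-r, 0), (0, -r)} = {(a, b). \<bar>a\<bar> + \<bar>b\<bar> \<le> r}"
proof
  show "convex hull {(r, 0), (0, r), (-r, 0), (0, -r)} \<subseteq> {(a, b). \<bar>a\<bar> + \<bar>b\<bar> \<le> r}"
    using assms by (intro hull_minimal convex_l1_ball) auto
  show "{(a, b). \<bar>a\<bar> + \<bar>b\<bar> \<le> r} \<subseteq> convex hull {(r, 0), (0, r), (-r, 0), (0, -r)}"
    using l1_ball_subset_hull[OF assms] .
qed

lemma l1_ball_side_length: "(r::real) \<ge> 0 \<Longrightarrow> dist ((r, 0) :: hyperbolic) (0, r) = sqrt 2 * r"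
  by (simp add: dist_Pair_Pair dist_real_def real_sqrt_mult power2_eq_square[symmetric])

theorem mainTheorem10:
  shows "H3 = {(a, b). \<bar>a\<bar> + \<bar>b\<bar> \<le> 2 / (3 * sqrt 3)}
     \<and> H3 = convex hull {(2 / (3 * sqrt 3), 0), (0, 2 / (3 * sqrt 3)),
                          (- 2 / (3 * sqrt 3), 0), (0, - 2 / (3 * sqrt 3))}
     \<and> dist ((2 / (3 * sqrt 3), 0) :: hyperbolic) (0, 2 / (3 * sqrt 3))
         = 2 * sqrt 2 / (3 * sqrt 3)"
proof (intro conjI)
  have r: "2 / (3 * sqrt 3) > (0::real)"
    by simp
  show "H3 = {(a, b). \<bar>a\<bar> + \<bar>b\<bar> \<le> 2 / (3 * sqrt 3)}"
    by (rule H3_eq_l1_ball)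
  then show "H3 = convex hull {(2 / (3 * sqrt 3), 0), (0, 2 / (3 * sqrt 3)),
                               (- 2 / (3 * sqrt 3), 0), (0, - 2 / (3 * sqrt 3))}"
    using l1_ball_eq_convex_hull[OF r] by simp
  show "dist ((2 / (3 * sqrt 3), 0) :: hyperbolic) (0, 2 / (3 * sqrt 3))
         = 2 * sqrt 2 / (3 * sqrt 3)"
    using l1_ball_side_length[of "2 / (3 * sqrt 3)"] r by simp
qed

end
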